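(* Consider the following two methods for minimizing a finite sum $F(\mathbf{w})=\frac1n\sum_{i=1}^n f_i(\mathbf{w})$, both using the naive empirical gradient estimator $\widehat{\nabla F}(\mathbf{w})=\frac1m\sum_{j=1}^m g_j(\mathbf{w})$, where $m\in\mathbb{N}$ is fixed and $g_1(\mathbf{w}),\dots,g_m(\mathbf{w})$ are obtained from $m$ stochastic first-order oracle calls at $\mathbf{w}$, i.e. each $g_j(\mathbf{w})=\nabla f_{i_j}(\mathbf{w})$ with $i_1,\dots,i_m$ i.i.d. uniform on $[n]$ (fresh samples at each use): (i) SGD with constant stepsize $\eta$: $\mathbf{w}_{k+1}=\mathbf{w}_k-\eta\,\widehat{\nabla F}(\mathbf{w}_k)$; (ii) SVRG with constant stepsize $\eta$ and inner-loop length $T$, in which at each outer iteration with reference point $\tilde{\mathbf{w}}$ one sets $\tilde{\boldsymbol\mu}=\widehat{\nabla F}(\tilde{\mathbf{w}})$, $\mathbf{w}_0=\tilde{\mathbf{w}}$, $\mathbf{w}_t=\mathbf{w}_{t-1}-\eta(\nabla f_{i_t}(\mathbf{w}_{t-1})-\nabla f_{i_t}(\tilde{\mathbf{w}})+\tilde{\boldsymbol\mu})$ for $t=1,\dots,T$ with $i_t$ i.i.d. uniform on $[n]$, and the next reference point is $\frac1T\sum_{t=1}^T\mathbf{w}_t$. Then: (a) (Lower bound in expectation) There exists $F\in\Sigma^1_1$ such that, for all sufficiently small $\epsilon>0$, for any choice of $m$ and stepsize $\eta$, the number of stochastic oracle calls needed by either method to output a point $\mathbf{w}$ with $\mathbb{E}[F(\mathbf{w})-F(\mathbf{w}^*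 )]\le\epsilon$ is at least $\Omega(1/\epsilon)$. (b) (Lower bound in high probability) There exists $F\in\Sigma^1_1$ such that, for all sufficiently small $\epsilon>0$ and $\delta>0$, for any choice of $m\ge 2$ and stepsize $\eta$, the number of stochastic oracle calls needed by either method to output a point $\mathbf{w}$ with $F(\mathbf{w})-F(\mathbf{w}^* )\le\epsilon$ with probability at least $1-\delta$ is at least $\Omega(1/\sqrt{\epsilon})$. (The witness used is, for even $n$, the one-dimensional function $F(w)=\frac1n\big(\frac n4(w-1)^2+\frac n4(w+1)^2\big)=\frac12(w^2+1)$, where $n/2$ of the $f_i$ equal $\frac12(w-1)^2$ and the other $n/2$ equal $\frac12(w+1)^2$, with a fixed initialization $w_0$ with $F(w_0)-F^*=\Delta>0$.)
   Context: $\Sigma^L_\mu$ denotes the class of finite sums $F=\frac1n\sum_{i=1}^n f_i$ on $\mathbb{R}^d$ in which every $f_i$ is $L$-smooth (i.e. $f_i(\mathbf{u})\le f_i(\mathbf{w})+\langle\nabla f_i(\mathbf{w}),\mathbf{u}-\mathbf{w}\rangle+\frac L2\|\mathbf{u}-\mathbf{w}\|^2$) and $\mu$-strongly convex (i.e. $f_i(\mathbf{u})\ge f_i(\mathbf{w})+\langle\nabla f_i(\mathbf{w}),\mathbf{u}-\mathbf{w}\rangle+\frac\mu2\|\mathbf{u}-\mathbf{w}\|^2$) for all $\mathbf{u},\mathbf{w}$. $\mathbf{w}^*$ is the minimizer of $F$. A stochastic first-order oracle call returns $(f_i(\mathbf{w}),\nabla f_i(\mathbf{w}))$ (possibly at several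 points simultaneously, for the same $i$) for an index $i\sim\mathrm{Unif}([n])$ drawn independently at each call and not revealed. The oracle-call count includes all calls made (estimator calls and, for SVRG, inner-loop calls). *)

theory Defs
  imports "HOL-Analysis.Analysis" "HOL-Probability.Probability_Mass_Function"
begin

definition Fsum :: "nat \<Rightarrow> (nat \<Rightarrow> 'a \<Rightarrow> real) \<Rightarrow> 'a \<Rightarrow> real" where
  "Fsum n f w = (\<Sum>i<n. f i w) / real n"

definition gap :: "nat \<Rightarrow> (nat \<Rightarrow> 'a \<Rightarrow> real) \<Rightarrow> 'a \<Rightarrow> real" where
  "gap n f w = Fsum n f w - (INF v. Fsum n f v)"

definition in_Sigma :: "real \<Rightarrow> real \<Rightarrow> nat \<Rightarrow> (nat \<Rightarrow> 'a::real_inner \<Rightarrow> real)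
    \<Rightarrow> (nat \<Rightarrow> 'a \<Rightarrow> 'a) \<Rightarrow> bool" where
  "in_Sigma L \<mu> n f g \<longleftrightarrow> 0 < n \<and> (\<forall>i<n.
     (\<forall>w. (f i has_derivative (\<lambda>h. g i w \<bullet> h)) (at w)) \<and>
     (\<forall>u w. f i u \<le> f i w + g i w \<bullet> (u - w) + L / 2 * (norm (u - w))\<^sup>2) \<and>
     (\<forall>u w. f i u \<ge> f i w + g i w \<bullet> (u - w) + \<mu> / 2 * (norm (u - w))\<^sup>2))"

definition idx :: "nat \<Rightarrow> nat pmf" where
  "idx n = pmf_of_set {..<n}"

primrec est_sum :: "nat \<Rightarrow> (nat \<Rightarrow> 'a \<Rightarrow> 'a::real_vector) \<Rightarrow> nat \<Rightarrow> 'a \<Rightarrow> 'a pmf" where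
  "est_sum n g 0 w = return_pmf 0"
| "est_sum n g (Suc m) w =
     bind_pmf (idx n) (\<lambda>i. map_pmf (\<lambda>s. g i w + s) (est_sum n g m w))"

definition est :: "nat \<Rightarrow> (nat \<Rightarrow> 'a \<Rightarrow> 'a::real_vector) \<Rightarrow> nat \<Rightarrow> 'a \<Rightarrow> 'a pmf" where
  "est n g m w = map_pmf (\<lambda>s. (1 / real m) *\<^sub>R s) (est_sum n g m w)"

text \<open>SGD: distribution of w_k after k iterations (k*m oracle calls).\<close>
primrec sgd :: "nat \<Rightarrow> (nat \<Rightarrow> 'a \<Rightarrow> 'a::real_vector) \<Rightarrow> nat \<Rightarrow> real \<Rightarrow> 'a \<Rightarrow> nat \<Rightarrow> 'a pmf" where
  "sgd n g m \<eta> w0 0 = return_pmf w0"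
| "sgd n g m \<eta> w0 (Suc k) =
     bind_pmf (sgd n g m \<eta> w0 k) (\<lambda>w. map_pmf (\<lambda>G. w - \<eta> *\<^sub>R G) (est n g m w))"

text \<open>SVRG inner loop: returns (w_t, w_1 + ... + w_t).\<close>
primrec svrg_inner :: "nat \<Rightarrow> (nat \<Rightarrow> 'a \<Rightarrow> 'a::real_vector) \<Rightarrow> real \<Rightarrow> 'a \<Rightarrow> 'a \<Rightarrow> nat
    \<Rightarrow> ('a \<times> 'a) pmf" where
  "svrg_inner n g \<eta> wt mu 0 = return_pmf (wt, 0)"
| "svrg_inner n g \<eta> wt mu (Suc t) =
     bind_pmf (svrg_inner n g \<eta> wt mu t) (\<lambda>(w, s).
       map_pmf (\<lambda>i. let w' = w - \<eta> *\<^sub>R (g i w - g i wt + mu) in (w', s + w')) (idx n))"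

text \<open>One SVRG outer iteration from reference point wt (m + T oracle calls).\<close>
definition svrg_epoch :: "nat \<Rightarrow> (nat \<Rightarrow> 'a \<Rightarrow> 'a::real_vector) \<Rightarrow> nat \<Rightarrow> real \<Rightarrow> nat \<Rightarrow> 'a \<Rightarrow> 'a pmf" where
  "svrg_epoch n g m \<eta> T wt =
     bind_pmf (est n g m wt) (\<lambda>mu.
       map_pmf (\<lambda>(w, s). (1 / real T) *\<^sub>R s) (svrg_inner n g \<eta> wt mu T))"

primrec svrg :: "nat \<Rightarrow> (nat \<Rightarrow> 'a \<Rightarrow> 'a::real_vector) \<Rightarrow> nat \<Rightarrow> real \<Rightarrow> nat \<Rightarrow> 'a \<Rightarrow> nat \<Rightarrow> 'a pmf" where
  "svrg n g m \<eta> T w0 0 = return_pmf w0"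
| "svrg n g m \<eta> T w0 (Suc S) = bind_pmf (svrg n g m \<eta> T w0 S) (svrg_epoch n g m \<eta> T)"

end

theory Submission
  imports Defs
begin

text \<open>
  Take \<open>f i w = \<parallel>w - a i\<parallel>\<^sup>2 / 2\<close> with anchors \<open>a i = \<plusminus>e\<close> for a unit vector \<open>e\<close>, so that
  \<open>F w - F w\<^sup>* = \<parallel>w\<parallel>\<^sup>2 / 2\<close> and every stochastic gradient is \<open>w - a i\<close>. The SVRG correction
  \<open>\<nabla>f i w - \<nabla>f i w' = w - w'\<close> does not depend on \<open>i\<close>, so an SVRG epoch is one SGD step (with an
  effective step size) using the \<open>m\<close>-sample estimator at the reference point; it therefore
  suffices to bound SGD started at \<open>e\<close>, for an arbitrary step size \<open>\<gamma>\<close>.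

  The second moment \<open>V k = E \<parallel>w k\<parallel>\<^sup>2\<close> obeys \<open>V (k+1) = (1-\<gamma>)\<^sup>2 V k + \<gamma>\<^sup>2/m\<close>; minimising over
  \<open>\<gamma>\<close> gives \<open>1 / V (k+1) \<le> 1 / V k + m\<close>, hence \<open>V k * (1 + k m) \<ge> 1\<close> and the expected gap is
  \<open>\<Omega>(1/(k m))\<close>. For the high-probability bound let \<open>r = sqrt (2 \<epsilon>)\<close> be the radius of the
  target ball. If \<open>\<bar>\<gamma>\<bar> > r m\<close>, the first sample of the last step moves the iterate by
  \<open>\<plusminus>(\<gamma>/m) e\<close>, so at most one of the two outcomes lands in the ball. Otherwise, while
  \<open>k m r \<le> 1/4\<close>, the mean \<open>(1-\<gamma>)\<^sup>k e\<close> stays at distance \<open>\<ge> 3/4\<close> from the origin and the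
  variance stays below \<open>4 r\<close>, so by Chebyshev's inequality the ball is hit with probability at
  most \<open>4 r < 3/4\<close>.
\<close>

definition quad_loss :: "(nat \<Rightarrow> 'a::real_inner) \<Rightarrow> nat \<Rightarrow> 'a \<Rightarrow> real" where
  "quad_loss a i w = (norm (w - a i))\<^sup>2 / 2"

definition quad_grad :: "(nat \<Rightarrow> 'a::real_vector) \<Rightarrow> nat \<Rightarrow> 'a \<Rightarrow> 'a" where
  "quad_grad a i w = w - a i"

lemma power2_norm_add:
  fixes x y :: "'a::real_inner"
  shows "(norm (x + y))\<^sup>2 = (norm x)\<^sup>2 + 2 * (x \<bullet> y) + (norm y)\<^sup>2"
  by (simp add: power2_norm_eq_inner inner_add_left inner_add_right inner_commute)

lemma power2_norm_diff:
  fixes x y :: "'a::real_inner"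
  shows "(norm (x - y))\<^sup>2 = (norm x)\<^sup>2 - 2 * (x \<bullet> y) + (norm y)\<^sup>2"
  by (simp add: power2_norm_eq_inner inner_diff_left inner_diff_right inner_commute)

lemma quad_loss_expansion:
  "quad_loss a i u = quad_loss a i w + quad_grad a i w \<bullet> (u - w) + 1 / 2 * (norm (u - w))\<^sup>2"
  using power2_norm_add[of "w - a i" "u - w"] by (simp add: quad_loss_def quad_grad_def)

lemma quad_loss_has_derivative:
  "(quad_loss a i has_derivative (\<lambda>h. quad_grad a i w \<bullet> h)) (at w)"
proof -
  have "quad_loss a i = (\<lambda>w. (w - a i) \<bullet> (w - a i) / 2)"
    by (simp add: fun_eq_iff quad_loss_def power2_norm_eq_inner)
  moreover have "(\<lambda>h. ((w - a i) \<bullet> h + h \<bullet> (w - a i)) / 2) = (\<lambda>h. quad_grad a i w \<bullet> h)"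
    by (simp add: fun_eq_iff quad_grad_def inner_commute)
  moreover have "((\<lambda>w. (w - a i) \<bullet> (w - a i) / 2) has_derivative
          (\<lambda>h. ((w - a i) \<bullet> h + h \<bullet> (w - a i)) / 2)) (at w)"
    by (auto intro!: derivative_eq_intros)
  ultimately show ?thesis by simp
qed

lemma in_Sigma_quad_loss: "0 < n \<Longrightarrow> in_Sigma 1 1 n (quad_loss a) (quad_grad a)"
  unfolding in_Sigma_def using quad_loss_has_derivative quad_loss_expansion by (metis order_refl)

lemma set_pmf_idx: "0 < n \<Longrightarrow> set_pmf (idx n) = {..<n}"
  unfolding idx_def by (subst set_pmf_of_set) auto

lemma finite_set_pmf_est_sum: "0 < n \<Longrightarrow> finite (set_pmf (est_sum n g m w))"
  by (induction m) (auto simp: set_pmf_idx)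

lemma finite_set_pmf_est: "0 < n \<Longrightarrow> finite (set_pmf (est n g m w))"
  unfolding est_def by (simp add: finite_set_pmf_est_sum)

lemma finite_set_pmf_sgd: "0 < n \<Longrightarrow> finite (set_pmf (sgd n g m \<gamma> w0 k))"
  by (induction k) (auto simp: finite_set_pmf_est)

lemma expectation_bind_pmf_finite:
  fixes h :: "_ \<Rightarrow> real"
  assumes "finite (set_pmf p)" and "\<And>x. x \<in> set_pmf p \<Longrightarrow> finite (set_pmf (f x))"
  shows "measure_pmf.expectation (bind_pmf p f) h
       = measure_pmf.expectation p (\<lambda>x. measure_pmf.expectation (f x) h)"
  using assms
  by (simp add: pmf_expectation_bind[of "set_pmf p"] integral_measure_pmf_real[of "set_pmf p"] mult.commute)

lemma prob_bind_pmf_finite: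
  assumes "finite (set_pmf p)" and "\<And>x. x \<in> set_pmf p \<Longrightarrow> finite (set_pmf (f x))"
  shows "measure_pmf.prob (bind_pmf p f) A = measure_pmf.expectation p (\<lambda>x. measure_pmf.prob (f x) A)"
  using expectation_bind_pmf_finite[OF assms, where h="indicator A"] by simp

lemma expectation_sgd_Suc:
  fixes h :: "'a::real_vector \<Rightarrow> real"
  assumes "0 < n"
  shows "measure_pmf.expectation (sgd n g m \<gamma> w0 (Suc k)) h =
    measure_pmf.expectation (sgd n g m \<gamma> w0 k)
      (\<lambda>w. measure_pmf.expectation (est n g m w) (\<lambda>G. h (w - \<gamma> *\<^sub>R G)))"
  using assms by (simp add: expectation_bind_pmf_finite finite_set_pmf_sgd finite_set_pmf_est)

lemma expectation_est_sum_Suc: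
  fixes h :: "'a::real_vector \<Rightarrow> real"
  assumes "0 < n"
  shows "measure_pmf.expectation (est_sum n g (Suc m) w) h =
    measure_pmf.expectation (idx n)
      (\<lambda>i. measure_pmf.expectation (est_sum n g m w) (\<lambda>s. h (g i w + s)))"
  using assms by (simp add: expectation_bind_pmf_finite set_pmf_idx finite_set_pmf_est_sum)

lemma svrg_inner_quad_grad:
  "svrg_inner n (quad_grad a) \<eta> wt mu t =
     return_pmf (wt - (1 - (1 - \<eta>) ^ t) *\<^sub>R mu,
                 real t *\<^sub>R wt - (\<Sum>j<t. 1 - (1 - \<eta>) ^ Suc j) *\<^sub>R mu)"
proof (induction t)
  case (Suc t)
  show ?case
    by (simp only: svrg_inner.simps Suc bind_return_pmf) (simp add: quad_grad_def Let_def algebra_simps)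
qed simp

definition svrg_effective_step :: "real \<Rightarrow> nat \<Rightarrow> real" where
  "svrg_effective_step \<eta> T = (\<Sum>j<T. 1 - (1 - \<eta>) ^ Suc j) / real T"

lemma svrg_quad_grad_eq_sgd:
  assumes "1 \<le> T"
  shows "svrg n (quad_grad a) m \<eta> T w0 S = sgd n (quad_grad a) m (svrg_effective_step \<eta> T) w0 S"
proof -
  have "svrg_epoch n (quad_grad a) m \<eta> T =
      (\<lambda>wt. map_pmf (\<lambda>G. wt - svrg_effective_step \<eta> T *\<^sub>R G) (est n (quad_grad a) m wt))"
    using assms
    by (simp add: fun_eq_iff svrg_epoch_def map_pmf_def svrg_inner_quad_grad bind_return_pmf
        svrg_effective_step_def algebra_simps)
  then show ?thesis by (induction S) simp_all
qed

lemma second_moment_recursion_lower_bound: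
  fixes x m k \<gamma> :: real
  assumes x: "0 < x" and m: "0 < m" and hyp: "1 \<le> x * (1 + k * m)"
  shows "1 \<le> ((1 - \<gamma>)\<^sup>2 * x + \<gamma>\<^sup>2 / m) * (1 + (k + 1) * m)"
proof -
  define y where "y = (1 - \<gamma>)\<^sup>2 * x + \<gamma>\<^sup>2 / m"
  have "0 \<le> y" unfolding y_def using x m by simp
  \<comment> \<open>the optimal step size \<open>\<gamma> = m x / (1 + m x)\<close> makes the square vanish\<close>
  have "m * (y * (1 + m * x) - x) = ((1 - \<gamma>) * m * x - \<gamma>)\<^sup>2"
    unfolding y_def using m by (simp add: field_simps power2_eq_square)
  then have "0 \<le> m * (y * (1 + m * x) - x)" by simp
  then have "x \<le> y * (1 + m * x)" using m by (simp add: zero_le_mult_iff)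
  also have "\<dots> \<le> y * (x * (1 + (k + 1) * m))"
    using hyp \<open>0 \<le> y\<close> by (intro mult_left_mono) (simp_all add: algebra_simps)
  finally have "x * 1 \<le> x * (y * (1 + (k + 1) * m))" by (simp add: algebra_simps)
  then show ?thesis unfolding y_def using x by simp
qed

lemma prob_ball_le_expectation_sq_dist:
  fixes M :: "'a::real_normed_vector"
  assumes fin: "finite (set_pmf p)" and t: "0 < t" and far: "r + t \<le> norm M"
  shows "measure_pmf.prob p {w. norm w \<le> r}
     \<le> measure_pmf.expectation p (\<lambda>w. (norm (w - M))\<^sup>2) / t\<^sup>2"
proof -
  have "{w. norm w \<le> r} \<subseteq> {w \<in> space (measure_pmf p). t\<^sup>2 \<le> (norm (w - M))\<^sup>2}"
  proof safe
    fix w :: 'a assume "norm w \<le> r"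
    then have "t \<le> norm (w - M)"
      using far norm_triangle_ineq2[of M w] by (simp add: norm_minus_commute)
    then show "t\<^sup>2 \<le> (norm (w - M))\<^sup>2" using t by (intro power_mono) auto
  qed simp
  then have "measure_pmf.prob p {w. norm w \<le> r}
      \<le> measure_pmf.prob p {w \<in> space (measure_pmf p). t\<^sup>2 \<le> (norm (w - M))\<^sup>2}"
    by (intro measure_pmf.finite_measure_mono) simp_all
  also have "\<dots> \<le> measure_pmf.expectation p (\<lambda>w. (norm (w - M))\<^sup>2) / t\<^sup>2"
    using fin t by (intro integral_Markov_inequality_measure[where A=UNIV])
      (auto intro: integrable_measure_pmf_finite)
  finally show ?thesis .
qed

locale sign_quadratic =
  fixes n :: nat and e :: "'a::euclidean_space"
  assumes even_n: "even n" and n_pos: "0 < n" and norm_e: "norm e = 1"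
begin

definition anchor :: "nat \<Rightarrow> 'a" where
  "anchor i = (if even i then e else - e)"

abbreviation "loss \<equiv> quad_loss anchor"
abbreviation "grad \<equiv> quad_grad anchor"

lemma sum_anchor: "(\<Sum>i<n. \<phi> (anchor i)) = real (n div 2) * (\<phi> e + \<phi> (- e))"
proof -
  have "(\<Sum>i<2 * j. \<phi> (anchor i)) = real j * (\<phi> e + \<phi> (- e))" for j
    by (induction j) (auto simp: anchor_def algebra_simps)
  then show ?thesis using even_n by (metis dvd_mult_div_cancel)
qed

lemma inner_e_e: "e \<bullet> e = 1"
  using norm_e by (metis power2_norm_eq_inner power_one)

lemma sq_norm_diff_add_e: "(norm (v - e))\<^sup>2 + (norm (v + e))\<^sup>2 = 2 * ((norm v)\<^sup>2 + 1)"
  by (simp add: power2_norm_add power2_norm_diff norm_e)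

lemma expectation_idx_anchor:
  fixes \<phi> :: "'a \<Rightarrow> real"
  shows "measure_pmf.expectation (idx n) (\<lambda>i. \<phi> (anchor i)) = (\<phi> e + \<phi> (- e)) / 2"
proof -
  have "measure_pmf.expectation (idx n) (\<lambda>i. \<phi> (anchor i)) = (\<Sum>i<n. \<phi> (anchor i)) / real n"
    unfolding idx_def using n_pos by (subst integral_pmf_of_set) auto
  then show ?thesis using n_pos even_n by (simp add: sum_anchor real_of_nat_div)
qed

lemma gap_loss: "gap n loss = (\<lambda>w. (norm w)\<^sup>2 / 2)"
proof -
  have "(\<Sum>i<n. loss i v) = real (n div 2) * ((norm v)\<^sup>2 + 1)" for v
    unfolding quad_loss_def by (subst sum_anchor) (simp add: add_divide_distrib[symmetric] sq_norm_diff_add_e)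
  then have Fsum: "Fsum n loss v = ((norm v)\<^sup>2 + 1) / 2" for v
    using n_pos even_n by (simp add: Fsum_def real_of_nat_div)
  have "(INF v. Fsum n loss v) = 1 / 2"
    unfolding Fsum by (rule cInf_eq_minimum[where z="1/2"]) (auto intro!: image_eqI[where x=0])
  then show ?thesis by (simp add: fun_eq_iff gap_def Fsum field_simps)
qed

lemma grad_apply: "grad i w = w - anchor i"
  by (simp add: quad_grad_def)

lemma finite_set_pmf_est_sum_grad: "finite (set_pmf (est_sum n grad m w))"
  using n_pos by (rule finite_set_pmf_est_sum)

lemma expectation_est_sum_inner:
  "measure_pmf.expectation (est_sum n grad m w) (\<lambda>S. v \<bullet> S) = real m * (v \<bullet> w)"
proof (induction m)
  case (Suc m)
  have "measure_pmf.expectation (est_sum n grad (Suc m) w) (\<lambda>S. v \<bullet> S)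
      = measure_pmf.expectation (idx n) (\<lambda>i. v \<bullet> (w - anchor i) + real m * (v \<bullet> w))"
    by (simp add: Suc.IH expectation_est_sum_Suc[OF n_pos] inner_add_right integrable_measure_pmf_finite
        finite_set_pmf_est_sum_grad grad_apply del: est_sum.simps)
  also have "\<dots> = real (Suc m) * (v \<bullet> w)"
    by (subst expectation_idx_anchor) (simp add: algebra_simps)
  finally show ?case .
qed simp

lemma expectation_est_sum_sq_norm:
  "measure_pmf.expectation (est_sum n grad m w) (\<lambda>S. (norm S)\<^sup>2) = (real m)\<^sup>2 * (norm w)\<^sup>2 + real m"
proof (induction m)
  case (Suc m)
  have "measure_pmf.expectation (est_sum n grad (Suc m) w) (\<lambda>S. (norm S)\<^sup>2)
      = measure_pmf.expectation (idx n) (\<lambda>i. (norm (w - anchor i))\<^sup>2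
          + 2 * (real m * ((w - anchor i) \<bullet> w)) + ((real m)\<^sup>2 * (norm w)\<^sup>2 + real m))"
    by (simp add: Suc.IH expectation_est_sum_Suc[OF n_pos] power2_norm_add integrable_measure_pmf_finite
        finite_set_pmf_est_sum_grad grad_apply expectation_est_sum_inner del: est_sum.simps)
  also have "\<dots> = (real (Suc m))\<^sup>2 * (norm w)\<^sup>2 + real (Suc m)"
    using sq_norm_diff_add_e[of w]
    by (subst expectation_idx_anchor) (simp add: dot_square_norm inner_commute algebra_simps power2_eq_square)
  finally show ?case .
qed simp

lemma expectation_est_step_inner:
  assumes "1 \<le> m"
  shows "measure_pmf.expectation (est n grad m w) (\<lambda>G. v \<bullet> (w - \<gamma> *\<^sub>R G)) = (1 - \<gamma>) * (v \<bullet> w)"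
  using assms by (simp add: est_def integrable_measure_pmf_finite finite_set_pmf_est_sum_grad
      expectation_est_sum_inner algebra_simps)

lemma expectation_est_step_sq_norm:
  assumes "1 \<le> m"
  shows "measure_pmf.expectation (est n grad m w) (\<lambda>G. (norm (w - \<gamma> *\<^sub>R G))\<^sup>2)
     = (1 - \<gamma>)\<^sup>2 * (norm w)\<^sup>2 + \<gamma>\<^sup>2 / real m"
proof -
  let ?c = "\<gamma> / real m"
  have "measure_pmf.expectation (est n grad m w) (\<lambda>G. (norm (w - \<gamma> *\<^sub>R G))\<^sup>2)
      = measure_pmf.expectation (est_sum n grad m w)
          (\<lambda>S. (norm w)\<^sup>2 - 2 * ?c * (w \<bullet> S) + ?c\<^sup>2 * (norm S)\<^sup>2)"
    by (simp add: est_def power2_norm_diff power_mult_distrib power_divide mult.assoc)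
  also have "\<dots> = (norm w)\<^sup>2 - 2 * ?c * (real m * (norm w)\<^sup>2) + ?c\<^sup>2 * ((real m)\<^sup>2 * (norm w)\<^sup>2 + real m)"
    by (simp add: integrable_measure_pmf_finite finite_set_pmf_est_sum_grad
        expectation_est_sum_inner expectation_est_sum_sq_norm dot_square_norm)
  also have "\<dots> = (1 - \<gamma>)\<^sup>2 * (norm w)\<^sup>2 + \<gamma>\<^sup>2 / real m"
    using assms by (simp add: field_simps power2_eq_square)
  finally show ?thesis .
qed

lemma finite_set_pmf_sgd_grad: "finite (set_pmf (sgd n grad m \<gamma> w0 k))"
  using n_pos by (rule finite_set_pmf_sgd)

lemma sgd_mean:
  assumes "1 \<le> m"
  shows "measure_pmf.expectation (sgd n grad m \<gamma> w0 k) (\<lambda>w. v \<bullet> w) = (1 - \<gamma>) ^ k * (v \<bullet> w0)"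
  by (induction k) (simp_all add: expectation_sgd_Suc[OF n_pos] expectation_est_step_inner[OF assms]
      del: sgd.simps(2))

lemma sgd_second_moment_Suc:
  assumes "1 \<le> m"
  shows "measure_pmf.expectation (sgd n grad m \<gamma> w0 (Suc k)) (\<lambda>w. (norm w)\<^sup>2) =
     (1 - \<gamma>)\<^sup>2 * measure_pmf.expectation (sgd n grad m \<gamma> w0 k) (\<lambda>w. (norm w)\<^sup>2) + \<gamma>\<^sup>2 / real m"
  by (simp add: expectation_sgd_Suc[OF n_pos] expectation_est_step_sq_norm[OF assms]
      integrable_measure_pmf_finite finite_set_pmf_sgd_grad del: sgd.simps(2))

lemma sgd_second_moment_lower_bound:
  assumes "1 \<le> m"
  shows "1 \<le> measure_pmf.expectation (sgd n grad m \<gamma> e k) (\<lambda>w. (norm w)\<^sup>2) * (1 + real k * real m)"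
proof (induction k)
  case 0
  show ?case by (simp add: norm_e)
next
  case (Suc k)
  let ?x = "measure_pmf.expectation (sgd n grad m \<gamma> e k) (\<lambda>w. (norm w)\<^sup>2)"
  have "?x \<noteq> 0" using Suc by auto
  moreover have "0 \<le> ?x" by (simp add: integral_nonneg)
  ultimately have "0 < ?x" by linarith
  then show ?case
    using second_moment_recursion_lower_bound[of ?x "real m" "real k" \<gamma>] Suc assms
    unfolding sgd_second_moment_Suc[OF assms] by (simp add: algebra_simps)
qed

lemma sgd_centred_second_moment:
  assumes "1 \<le> m"
  shows "measure_pmf.expectation (sgd n grad m \<gamma> e k) (\<lambda>w. (norm (w - (1 - \<gamma>) ^ k *\<^sub>R e))\<^sup>2)
    = measure_pmf.expectation (sgd n grad m \<gamma> e k) (\<lambda>w. (norm w)\<^sup>2) - ((1 - \<gamma>) ^ k)\<^sup>2"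
proof -
  let ?\<mu> = "(1 - \<gamma>) ^ k"
  have "measure_pmf.expectation (sgd n grad m \<gamma> e k) (\<lambda>w. (norm (w - ?\<mu> *\<^sub>R e))\<^sup>2)
      = measure_pmf.expectation (sgd n grad m \<gamma> e k) (\<lambda>w. (norm w)\<^sup>2 - 2 * (?\<mu> * (w \<bullet> e)) + ?\<mu>\<^sup>2)"
    by (simp add: power2_norm_diff norm_e)
  also have "\<dots> = measure_pmf.expectation (sgd n grad m \<gamma> e k) (\<lambda>w. (norm w)\<^sup>2) - ?\<mu>\<^sup>2"
    using sgd_mean[OF assms, of \<gamma> e k e]
    by (simp add: integrable_measure_pmf_finite finite_set_pmf_sgd_grad inner_commute inner_e_e
        power2_eq_square)
  finally show ?thesis .
qed

lemma sgd_variance_upper_bound: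
  assumes "1 \<le> m"
  shows "measure_pmf.expectation (sgd n grad m \<gamma> e k) (\<lambda>w. (norm w)\<^sup>2) - ((1 - \<gamma>) ^ k)\<^sup>2
     \<le> \<gamma>\<^sup>2 * real k / real m * (1 + \<bar>\<gamma>\<bar>) ^ (2 * k)"
proof (induction k)
  case 0
  show ?case by (simp add: norm_e)
next
  case (Suc k)
  let ?D = "\<lambda>k. measure_pmf.expectation (sgd n grad m \<gamma> e k) (\<lambda>w. (norm w)\<^sup>2) - ((1 - \<gamma>) ^ k)\<^sup>2"
  let ?B = "\<gamma>\<^sup>2 * real k / real m * (1 + \<bar>\<gamma>\<bar>) ^ (2 * k)"
  have sq: "(1 - \<gamma>)\<^sup>2 \<le> (1 + \<bar>\<gamma>\<bar>)\<^sup>2"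
    using abs_triangle_ineq4[of 1 \<gamma>] by (subst power2_le_iff_abs_le) auto
  have one: "\<gamma>\<^sup>2 / real m * 1 \<le> \<gamma>\<^sup>2 / real m * (1 + \<bar>\<gamma>\<bar>) ^ (2 * Suc k)"
    by (intro mult_left_mono one_le_power) simp_all
  have "?D (Suc k) = (1 - \<gamma>)\<^sup>2 * ?D k + \<gamma>\<^sup>2 / real m"
    unfolding sgd_second_moment_Suc[OF assms] power_Suc power_mult_distrib by (simp add: algebra_simps)
  also have "\<dots> \<le> (1 - \<gamma>)\<^sup>2 * ?B + \<gamma>\<^sup>2 / real m"
    using Suc by (intro add_right_mono mult_left_mono) simp_all
  also have "\<dots> \<le> (1 + \<bar>\<gamma>\<bar>)\<^sup>2 * ?B + \<gamma>\<^sup>2 / real m * (1 + \<bar>\<gamma>\<bar>) ^ (2 * Suc k)"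
    using sq one by (intro add_mono mult_right_mono) simp_all
  also have "\<dots> = \<gamma>\<^sup>2 * real (Suc k) / real m * (1 + \<bar>\<gamma>\<bar>) ^ (2 * Suc k)"
    unfolding mult_Suc_right power_add by (simp add: algebra_simps add_divide_distrib)
  finally show ?case .
qed

lemma prob_est_step_ball_le_half:
  assumes m: "1 \<le> m" and large_step: "r * real m < \<bar>\<gamma>\<bar>"
  shows "measure_pmf.prob (est n grad m w) {G. norm (w - \<gamma> *\<^sub>R G) \<le> r} \<le> 1 / 2"
proof -
  obtain m' where m': "m = Suc m'" using m by (cases m) auto
  define c where "c = \<gamma> / real m"
  define X where "X a = {s. norm (w - c *\<^sub>R (w - a + s)) \<le> r}" for a
  have "measure_pmf.prob (est n grad m w) {G. norm (w - \<gamma> *\<^sub>R G) \<le> r}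
      = measure_pmf.expectation (idx n) (\<lambda>i. measure_pmf.prob (est_sum n grad m' w) (X (anchor i)))"
    unfolding est_def m' using n_pos
    by (simp add: prob_bind_pmf_finite set_pmf_idx finite_set_pmf_est_sum_grad grad_apply vimage_def
        X_def c_def m')
  also have "\<dots> = (measure_pmf.prob (est_sum n grad m' w) (X e)
      + measure_pmf.prob (est_sum n grad m' w) (X (- e))) / 2"
    by (rule expectation_idx_anchor)
  also have "\<dots> \<le> 1 / 2"
  proof -
    \<comment> \<open>the two possible first samples move the iterate \<open>2 \<bar>c\<bar> > 2 r\<close> apart\<close>
    have "X e \<inter> X (- e) = {}"
    proof (intro equals0I)
      fix s assume "s \<in> X e \<inter> X (- e)"
      then have "norm (w - c *\<^sub>R (w - e + s)) \<le> r" "norm (w - c *\<^sub>R (w + e + s)) \<le> r"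
        by (simp_all add: X_def)
      then have "norm ((w - c *\<^sub>R (w - e + s)) - (w - c *\<^sub>R (w + e + s))) \<le> 2 * r"
        using norm_triangle_ineq4[of "w - c *\<^sub>R (w - e + s)" "w - c *\<^sub>R (w + e + s)"] by linarith
      moreover have "(w - c *\<^sub>R (w - e + s)) - (w - c *\<^sub>R (w + e + s)) = (2 * c) *\<^sub>R e"
        by (simp add: algebra_simps) (metis scaleR_2 scaleR_scaleR mult.commute)
      ultimately have "\<bar>\<gamma>\<bar> \<le> r * real m"
        using m norm_e by (simp add: c_def abs_mult field_simps)
      then show False using large_step by simp
    qed
    then have "measure_pmf.prob (est_sum n grad m' w) (X e) + measure_pmf.prob (est_sum n grad m' w) (X (- e))
        = measure_pmf.prob (est_sum n grad m' w) (X e \<union> X (- e))"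
      by (simp add: measure_pmf.finite_measure_Union)
    also have "\<dots> \<le> 1" by (rule measure_pmf.prob_le_1)
    finally show ?thesis by simp
  qed
  finally show ?thesis .
qed

lemma prob_sgd_Suc_ball_le_half:
  assumes "1 \<le> m" and "r * real m < \<bar>\<gamma>\<bar>"
  shows "measure_pmf.prob (sgd n grad m \<gamma> w0 (Suc k)) {w. norm w \<le> r} \<le> 1 / 2"
proof -
  have "measure_pmf.prob (sgd n grad m \<gamma> w0 (Suc k)) {w. norm w \<le> r}
      = measure_pmf.expectation (sgd n grad m \<gamma> w0 k)
          (\<lambda>w. measure_pmf.prob (est n grad m w) {G. norm (w - \<gamma> *\<^sub>R G) \<le> r})"
    using n_pos by (simp add: prob_bind_pmf_finite finite_set_pmf_sgd_grad finite_set_pmf_est vimage_def)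
  also have "\<dots> \<le> 1 / 2"
    using prob_est_step_ball_le_half[OF assms] by (intro measure_pmf.integral_le_const AE_I2)
      (simp_all add: integrable_measure_pmf_finite finite_set_pmf_sgd_grad)
  finally show ?thesis .
qed

lemma prob_sgd_ball_small_steps:
  assumes m: "1 \<le> m" and small: "real k * \<bar>\<gamma>\<bar> \<le> 1 / 4" and r: "r \<le> 1 / 4"
  shows "measure_pmf.prob (sgd n grad m \<gamma> e k) {w. norm w \<le> r} \<le> 16 * \<gamma>\<^sup>2 * real k / real m"
proof -
  let ?\<mu> = "(1 - \<gamma>) ^ k"
  have mean: "3 / 4 \<le> ?\<mu>"
  proof (cases "k = 0")
    case False
    then have "1 * \<bar>\<gamma>\<bar> \<le> real k * \<bar>\<gamma>\<bar>" by (intro mult_right_mono) simp_all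
    then have "1 + real k * - \<gamma> \<le> ?\<mu>"
      using small Bernoulli_inequality[of "- \<gamma>" k] by simp
    moreover have "real k * \<gamma> \<le> real k * \<bar>\<gamma>\<bar>" by (intro mult_left_mono) simp_all
    ultimately show ?thesis using small by simp
  qed simp
  have "(1 + \<bar>\<gamma>\<bar>) ^ k \<le> exp \<bar>\<gamma>\<bar> ^ k"
    by (intro power_mono) simp_all
  also have "\<dots> = exp (real k * \<bar>\<gamma>\<bar>)" by (simp add: exp_of_nat_mult)
  also have "\<dots> \<le> 1 + 2 * (real k * \<bar>\<gamma>\<bar>)"
    using exp_bound_lemma[of "real k * \<bar>\<gamma>\<bar>"] small by simp
  finally have "(1 + \<bar>\<gamma>\<bar>) ^ k \<le> 2" using small by simp
  then have "((1 + \<bar>\<gamma>\<bar>) ^ k)\<^sup>2 \<le> 2\<^sup>2" by (intro power_mono) simp_all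
  then have growth: "(1 + \<bar>\<gamma>\<bar>) ^ (2 * k) \<le> 4" by (simp add: power_mult mult.commute[of 2])
  have "measure_pmf.prob (sgd n grad m \<gamma> e k) {w. norm w \<le> r}
      \<le> measure_pmf.expectation (sgd n grad m \<gamma> e k) (\<lambda>w. (norm (w - ?\<mu> *\<^sub>R e))\<^sup>2) / (1 / 2)\<^sup>2"
    using mean r norm_e by (intro prob_ball_le_expectation_sq_dist) (simp_all add: finite_set_pmf_sgd_grad)
  also have "\<dots> \<le> 4 * (\<gamma>\<^sup>2 * real k / real m * (1 + \<bar>\<gamma>\<bar>) ^ (2 * k))"
    using sgd_variance_upper_bound[OF m, of \<gamma> k] unfolding sgd_centred_second_moment[OF m]
    by (simp add: power2_eq_square)
  also have "\<dots> \<le> 16 * \<gamma>\<^sup>2 * real k / real m"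
    using mult_left_mono[OF growth, of "\<gamma>\<^sup>2 * real k / real m"] by simp
  finally show ?thesis .
qed

lemma prob_sgd_ball_lt:
  assumes m: "1 \<le> m" and r: "0 \<le> r" "4 * r < 3 / 4" and budget: "real k * real m * r \<le> 1 / 4"
  shows "measure_pmf.prob (sgd n grad m \<gamma> e k) {w. norm w \<le> r} < 3 / 4"
proof -
  \<comment> \<open>large steps spread the last iterate, small steps cannot leave the neighbourhood of \<open>e\<close>\<close>
  consider "k = 0" | "0 < k" "r * real m < \<bar>\<gamma>\<bar>" | "\<bar>\<gamma>\<bar> \<le> r * real m"
    by linarith
  then show ?thesis
  proof cases
    case 1
    then show ?thesis using r norm_e by simp
  next
    case 2
    then obtain k' where k: "k = Suc k'" using gr0_implies_Suc by blast
    show ?thesis using prob_sgd_Suc_ball_le_half[OF m 2(2), of e k'] unfolding k by linarith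
  next
    case 3
    then have "real k * \<bar>\<gamma>\<bar> \<le> real k * (r * real m)" by (intro mult_left_mono) simp_all
    with budget have small: "real k * \<bar>\<gamma>\<bar> \<le> 1 / 4" by (simp add: algebra_simps)
    have "\<gamma>\<^sup>2 * real k = \<bar>\<gamma>\<bar> * (real k * \<bar>\<gamma>\<bar>)" by (simp add: power2_eq_square)
    also have "\<dots> \<le> (r * real m) * (1 / 4)" using 3 small by (intro mult_mono) simp_all
    finally have "16 * \<gamma>\<^sup>2 * real k / real m \<le> 4 * r" using m by (simp add: field_simps)
    moreover have "measure_pmf.prob (sgd n grad m \<gamma> e k) {w. norm w \<le> r} \<le> 16 * \<gamma>\<^sup>2 * real k / real m"
      using r by (intro prob_sgd_ball_small_steps[OF m small]) simp
    ultimately show ?thesis using r by linarith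
  qed
qed

lemma sgd_expected_gap_cost:
  assumes m: "1 \<le> m" and \<epsilon>: "0 < \<epsilon>" "\<epsilon> \<le> 1 / 4"
    and reached: "measure_pmf.expectation (sgd n grad m \<gamma> e k) (gap n loss) \<le> \<epsilon>"
  shows "1 / (4 * \<epsilon>) \<le> real (k * m)"
proof -
  let ?V = "measure_pmf.expectation (sgd n grad m \<gamma> e k) (\<lambda>w. (norm w)\<^sup>2)"
  have "?V \<le> 2 * \<epsilon>" using reached by (simp add: gap_loss)
  then have "?V * (1 + real k * real m) \<le> 2 * \<epsilon> * (1 + real k * real m)"
    by (intro mult_right_mono) simp_all
  with sgd_second_moment_lower_bound[OF m, of \<gamma> k] have "1 \<le> 2 * \<epsilon> + 2 * \<epsilon> * (real k * real m)"
    by (simp add: algebra_simps)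
  with \<epsilon> have "1 \<le> 4 * \<epsilon> * (real k * real m)" by simp
  with \<epsilon> show ?thesis by (simp add: field_simps)
qed

lemma sgd_high_prob_cost:
  assumes m: "1 \<le> m" and \<epsilon>: "0 < \<epsilon>" "\<epsilon> < 1 / 100"
    and reached: "3 / 4 < measure_pmf.prob (sgd n grad m \<gamma> e k) {w. gap n loss w \<le> \<epsilon>}"
  shows "1 / (8 * sqrt \<epsilon>) \<le> real (k * m)"
proof (rule ccontr)
  assume "\<not> ?thesis"
  with \<epsilon> have budget: "real k * real m * sqrt \<epsilon> \<le> 1 / 8" by (simp add: field_simps)
  define r where "r = sqrt (2 * \<epsilon>)"
  have ball: "{w. gap n loss w \<le> \<epsilon>} = {w. norm w \<le> r}"
  proof (intro Collect_cong)
    show "gap n loss w \<le> \<epsilon> \<longleftrightarrow> norm w \<le> r" for w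
      using real_le_rsqrt[of "norm w" "2 * \<epsilon>"] sqrt_ge_absD[of "norm w" "2 * \<epsilon>"]
      by (auto simp: r_def gap_loss)
  qed
  have "r < sqrt (9 / 256)" using \<epsilon> unfolding r_def by simp
  also have "sqrt (9 / 256) = 3 / 16" by (rule real_sqrt_unique) (simp_all add: power2_eq_square)
  finally have "r < 3 / 16" .
  have "sqrt 2 \<le> sqrt 4" by (rule real_sqrt_le_mono) simp
  then have "sqrt 2 \<le> 2" by simp
  then have "sqrt 2 * (real k * real m * sqrt \<epsilon>) \<le> 2 * (1 / 8)"
    using budget \<epsilon> by (intro mult_mono) simp_all
  then have "real k * real m * r \<le> 1 / 4" by (simp add: r_def real_sqrt_mult algebra_simps)
  then have "measure_pmf.prob (sgd n grad m \<gamma> e k) {w. norm w \<le> r} < 3 / 4"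
    using \<open>r < 3 / 16\<close> \<epsilon> by (intro prob_sgd_ball_lt[OF m]) (simp_all add: r_def)
  with reached show False unfolding ball by simp
qed

lemma svrg_expected_gap_cost:
  assumes "1 \<le> m" "1 \<le> T" "0 < \<epsilon>" "\<epsilon> \<le> 1 / 4"
    and "measure_pmf.expectation (svrg n grad m \<eta> T e S) (gap n loss) \<le> \<epsilon>"
  shows "1 / (4 * \<epsilon>) \<le> real (S * (m + T))"
proof -
  have "1 / (4 * \<epsilon>) \<le> real (S * m)"
    using assms by (intro sgd_expected_gap_cost) (simp_all add: svrg_quad_grad_eq_sgd)
  also have "\<dots> \<le> real (S * (m + T))" unfolding of_nat_le_iff by simp
  finally show ?thesis .
qed

lemma svrg_high_prob_cost:
  assumes "1 \<le> m" "1 \<le> T" "0 < \<epsilon>" "\<epsilon> < 1 / 100"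
    and "3 / 4 < measure_pmf.prob (svrg n grad m \<eta> T e S) {w. gap n loss w \<le> \<epsilon>}"
  shows "1 / (8 * sqrt \<epsilon>) \<le> real (S * (m + T))"
proof -
  have "1 / (8 * sqrt \<epsilon>) \<le> real (S * m)"
    using assms by (intro sgd_high_prob_cost) (simp_all add: svrg_quad_grad_eq_sgd)
  also have "\<dots> \<le> real (S * (m + T))" unfolding of_nat_le_iff by simp
  finally show ?thesis .
qed

lemma lower_bound_in_expectation:
  "\<exists>c > 0. \<exists>\<epsilon>0 > 0. \<forall>\<epsilon>. 0 < \<epsilon> \<and> \<epsilon> < \<epsilon>0 \<longrightarrow>
     (\<forall>m \<eta> k. m \<ge> 1 \<longrightarrow>
        measure_pmf.expectation (sgd n grad m \<eta> e k) (gap n loss) \<le> \<epsilon> \<longrightarrow>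
        real (k * m) \<ge> c / \<epsilon>) \<and>
     (\<forall>m \<eta> T S. m \<ge> 1 \<longrightarrow> T \<ge> 1 \<longrightarrow>
        measure_pmf.expectation (svrg n grad m \<eta> T e S) (gap n loss) \<le> \<epsilon> \<longrightarrow>
        real (S * (m + T)) \<ge> c / \<epsilon>)"
  using sgd_expected_gap_cost svrg_expected_gap_cost
  by (intro exI[of _ "1/4"] conjI allI impI) auto

lemma lower_bound_with_high_probability:
  "\<exists>c > 0. \<exists>\<epsilon>0 > 0. \<exists>\<delta>0 > 0. \<forall>\<epsilon> \<delta>. 0 < \<epsilon> \<and> \<epsilon> < \<epsilon>0 \<and> 0 < \<delta> \<and> \<delta> < \<delta>0 \<longrightarrow>
     (\<forall>m \<eta> k. m \<ge> 2 \<longrightarrow>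
        measure_pmf.prob (sgd n grad m \<eta> e k) {w. gap n loss w \<le> \<epsilon>} \<ge> 1 - \<delta> \<longrightarrow>
        real (k * m) \<ge> c / sqrt \<epsilon>) \<and>
     (\<forall>m \<eta> T S. m \<ge> 2 \<longrightarrow> T \<ge> 1 \<longrightarrow>
        measure_pmf.prob (svrg n grad m \<eta> T e S) {w. gap n loss w \<le> \<epsilon>} \<ge> 1 - \<delta> \<longrightarrow>
        real (S * (m + T)) \<ge> c / sqrt \<epsilon>)"
proof (rule exI[of _ "1/8"], intro conjI exI[of _ "1/100"] allI impI)
  fix \<epsilon> \<delta> :: real and m k :: nat and \<eta>
  assume "0 < \<epsilon> \<and> \<epsilon> < 1 / 100 \<and> 0 < \<delta> \<and> \<delta> < 1 / 100" "m \<ge> 2"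
    and "measure_pmf.prob (sgd n grad m \<eta> e k) {w. gap n loss w \<le> \<epsilon>} \<ge> 1 - \<delta>"
  then show "real (k * m) \<ge> 1 / 8 / sqrt \<epsilon>"
    using sgd_high_prob_cost[of m \<epsilon> \<eta> k] by simp
next
  fix \<epsilon> \<delta> :: real and m T S :: nat and \<eta>
  assume "0 < \<epsilon> \<and> \<epsilon> < 1 / 100 \<and> 0 < \<delta> \<and> \<delta> < 1 / 100" "m \<ge> 2" "T \<ge> 1"
    and "measure_pmf.prob (svrg n grad m \<eta> T e S) {w. gap n loss w \<le> \<epsilon>} \<ge> 1 - \<delta>"
  then show "real (S * (m + T)) \<ge> 1 / 8 / sqrt \<epsilon>"
    using svrg_high_prob_cost[of m T \<epsilon> \<eta> S] by simp
qed simp_all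

end

theorem theorem1:
  fixes n :: nat
  assumes "even n" and "n > 0"
  shows
   "(\<exists>(f :: nat \<Rightarrow> 'a::euclidean_space \<Rightarrow> real) g w0.
      in_Sigma 1 1 n f g \<and> gap n f w0 > 0 \<and>
      (\<exists>c > 0. \<exists>\<epsilon>0 > 0. \<forall>\<epsilon>. 0 < \<epsilon> \<and> \<epsilon> < \<epsilon>0 \<longrightarrow>
        (\<forall>m \<eta> k. m \<ge> 1 \<longrightarrow>
           measure_pmf.expectation (sgd n g m \<eta> w0 k) (gap n f) \<le> \<epsilon> \<longrightarrow>
           real (k * m) \<ge> c / \<epsilon>) \<and>
        (\<forall>m \<eta> T S. m \<ge> 1 \<longrightarrow> T \<ge> 1 \<longrightarrow>
           measure_pmf.expectation (svrg n g m \<eta> T w0 S) (gap n f) \<le> \<epsilon> \<longrightarrow>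
           real (S * (m + T)) \<ge> c / \<epsilon>)))
  \<and>
   (\<exists>(f :: nat \<Rightarrow> 'a::euclidean_space \<Rightarrow> real) g w0.
      in_Sigma 1 1 n f g \<and> gap n f w0 > 0 \<and>
      (\<exists>c > 0. \<exists>\<epsilon>0 > 0. \<exists>\<delta>0 > 0. \<forall>\<epsilon> \<delta>. 0 < \<epsilon> \<and> \<epsilon> < \<epsilon>0 \<and> 0 < \<delta> \<and> \<delta> < \<delta>0 \<longrightarrow>
        (\<forall>m \<eta> k. m \<ge> 2 \<longrightarrow>
           measure_pmf.prob (sgd n g m \<eta> w0 k) {w. gap n f w \<le> \<epsilon>} \<ge> 1 - \<delta> \<longrightarrow>
           real (k * m) \<ge> c / sqrt \<epsilon>) \<and>
        (\<forall>m \<eta> T S. m \<ge> 2 \<longrightarrow> T \<ge> 1 \<longrightarrow>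
           measure_pmf.prob (svrg n g m \<eta> T w0 S) {w. gap n f w \<le> \<epsilon>} \<ge> 1 - \<delta> \<longrightarrow>
           real (S * (m + T)) \<ge> c / sqrt \<epsilon>)))"
proof -
  obtain e :: 'a where "e \<in> Basis" using nonempty_Basis by blast
  then interpret sign_quadratic n e
    using assms by unfold_locales simp_all
  have "in_Sigma 1 1 n loss grad" "0 < gap n loss e"
    using in_Sigma_quad_loss[OF n_pos] by (simp_all add: gap_loss norm_e)
  then show ?thesis
    by (intro conjI exI[of _ loss] exI[of _ grad] exI[of _ e]
        lower_bound_in_expectation lower_bound_with_high_probability)
qed

end
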